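(* Let $Y$ be a real normed linear space and let $T\in L(\ell_1^n,Y)$, $T\neq\theta$, be approximately smooth (i.e. $\varepsilon$-smooth for some $\varepsilon\in[0,2)$). Then $M_T=\{\pm u\}$ for some $u\in\operatorname{Ext}B_{\ell_1^n}$.
   Context: $\ell_1^n$ is $\mathbb{R}^n$ with the $\ell_1$ norm; $L(\ell_1^n,Y)$ is the space of bounded linear operators with operator norm, and smoothness refers to $T$ as an element of this space. For a normed space $Z$ and $z\neq\theta$, $J(z)=\{\phi\in S_{Z^*}:\phi(z)=\|z\|\}$, and $z$ is $\varepsilon$-smooth if $\sup_{\phi,\psi\in J(z)}\|\phi-\psi\|\le\varepsilon$. $M_T=\{x\in S_{\ell_1^n}:\|Tx\|=\|T\|\}$; $\operatorname{Ext}B_{\ell_1^n}$ is the set of extreme points of the closed unit ball of $\ell_1^n$. *)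

theory Defs
  imports "HOL-Analysis.Analysis"
begin

text \<open>ell_1^n is modelled as real^'n (n = CARD('n)) equipped with the l1 norm.\<close>

definition l1norm :: "real^'n \<Rightarrow> real" where
  "l1norm x = (\<Sum>i\<in>UNIV. \<bar>x $ i\<bar>)"

definition opnorm1 :: "(real^'n \<Rightarrow> 'b::real_normed_vector) \<Rightarrow> real" where
  "opnorm1 T = Sup ((\<lambda>x. norm (T x)) ` {x. l1norm x \<le> 1})"

text \<open>The space L(ell_1^n, Y) (all linear maps are bounded, domain finite-dimensional).\<close>
definition Lsp :: "(real^'n \<Rightarrow> 'b::real_normed_vector) set" where
  "Lsp = {T. linear T}"

text \<open>Norm of a functional on L(ell_1^n, Y) (only its values on Lsp matter).\<close>
definition dual_norm :: "((real^'n \<Rightarrow> 'b::real_normed_vector) \<Rightarrow> real) \<Rightarrow> real" where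
  "dual_norm \<phi> = Sup ((\<lambda>S. \<bar>\<phi> S\<bar>) ` {S \<in> Lsp. opnorm1 S \<le> 1})"

definition is_dual :: "((real^'n \<Rightarrow> 'b::real_normed_vector) \<Rightarrow> real) \<Rightarrow> bool" where
  "is_dual \<phi> \<longleftrightarrow>
     (\<forall>S\<in>Lsp. \<forall>R\<in>Lsp. \<forall>a b. \<phi> (\<lambda>x. a *\<^sub>R S x + b *\<^sub>R R x) = a * \<phi> S + b * \<phi> R) \<and>
     bdd_above ((\<lambda>S. \<bar>\<phi> S\<bar>) ` {S \<in> Lsp. opnorm1 S \<le> 1})"

definition Jset :: "(real^'n \<Rightarrow> 'b::real_normed_vector) \<Rightarrow> ((real^'n \<Rightarrow> 'b) \<Rightarrow> real) set" where
  "Jset T = {\<phi>. is_dual \<phi> \<and> dual_norm \<phi> = 1 \<and> \<phi> T = opnorm1 T}"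

definition eps_smooth :: "real \<Rightarrow> (real^'n \<Rightarrow> 'b::real_normed_vector) \<Rightarrow> bool" where
  "eps_smooth \<epsilon> T \<longleftrightarrow> T \<noteq> (\<lambda>x. 0) \<and>
     (\<forall>\<phi>\<in>Jset T. \<forall>\<psi>\<in>Jset T. dual_norm (\<lambda>S. \<phi> S - \<psi> S) \<le> \<epsilon>)"

definition M_set :: "(real^'n \<Rightarrow> 'b::real_normed_vector) \<Rightarrow> (real^'n) set" where
  "M_set T = {x. l1norm x = 1 \<and> norm (T x) = opnorm1 T}"

end

theory Submission
  imports Defs
begin

text \<open>
  On \<open>\<ell>\<^sub>1\<^sup>n\<close> the operator norm of \<open>T\<close> is the largest norm of a column \<open>T e\<^sub>i\<close>.
  If two distinct columns \<open>e\<^sub>i\<close>, \<open>e\<^sub>j\<close> attain it, Hahn-Banach gives norming functionals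
  \<open>f\<close>, \<open>g\<close> of \<open>T e\<^sub>i\<close>, \<open>T e\<^sub>j\<close>; then \<open>S \<mapsto> f (S e\<^sub>i)\<close> and \<open>S \<mapsto> g (S e\<^sub>j)\<close> both lie in
  \<open>J(T)\<close>, and on the operator of norm one sending \<open>e\<^sub>i \<mapsto> T e\<^sub>i / \<parallel>T\<parallel>\<close>,
  \<open>e\<^sub>j \<mapsto> - T e\<^sub>j / \<parallel>T\<parallel>\<close> they differ by \<open>2\<close>. So an \<open>\<epsilon>\<close>-smooth \<open>T\<close> with \<open>\<epsilon> < 2\<close>
  attains its norm at a unique column \<open>e\<^sub>i\<close>, and every \<open>x \<in> M\<^sub>T\<close> must then be supported
  on \<open>i\<close>, i.e. \<open>x = \<plusminus>e\<^sub>i\<close>.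
\<close>

lemma abs_component_le_l1norm: "\<bar>x $ i\<bar> \<le> l1norm x"
  unfolding l1norm_def by (rule member_le_sum) auto

lemma l1norm_scaleR: "l1norm (c *\<^sub>R x) = \<bar>c\<bar> * l1norm x"
  by (simp add: l1norm_def abs_mult sum_distrib_left)

lemma l1norm_uminus: "l1norm (- x) = l1norm x"
  by (simp add: l1norm_def)

lemma l1norm_axis: "l1norm (axis i c :: real^'n) = \<bar>c\<bar>"
  by (simp add: l1norm_def axis_def if_distrib[where f = abs] cong: if_cong)

lemma l1norm_le_1_component_eq_1:
  assumes "l1norm x \<le> 1" "x $ i = 1"
  shows "x = axis i 1"
proof -
  have "l1norm x = \<bar>x $ i\<bar> + (\<Sum>k\<in>UNIV - {i}. \<bar>x $ k\<bar>)"
    unfolding l1norm_def by (simp add: sum.remove)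
  then have "(\<Sum>k\<in>UNIV - {i}. \<bar>x $ k\<bar>) = 0"
    using assms sum_nonneg[of "UNIV - {i}" "\<lambda>k. \<bar>x $ k\<bar>"] by linarith
  then have "x $ k = 0" if "k \<noteq> i" for k
    using that by (simp add: sum_nonneg_eq_0_iff)
  then show ?thesis
    using assms(2) by (auto simp: vec_eq_iff axis_def)
qed

lemma axis_extreme_point_l1_ball: "axis i 1 extreme_point_of {x :: real^'n. l1norm x \<le> 1}"
  unfolding extreme_point_of_def
proof (intro conjI ballI notI)
  show "axis i 1 \<in> {x :: real^'n. l1norm x \<le> 1}"
    by (simp add: l1norm_axis)
next
  fix a b :: "real^'n"
  assume a: "a \<in> {x. l1norm x \<le> 1}" and b: "b \<in> {x. l1norm x \<le> 1}"
    and "axis i 1 \<in> open_segment a b"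
  then obtain u where "a \<noteq> b" "0 < u" "u < 1" and u: "axis i 1 = (1 - u) *\<^sub>R a + u *\<^sub>R b"
    by (auto simp: in_segment)
  have "a $ i \<le> 1" "b $ i \<le> 1"
    using a b abs_component_le_l1norm[of a i] abs_component_le_l1norm[of b i] by auto
  then have "0 \<le> (1 - u) * (1 - a $ i)" "0 \<le> u * (1 - b $ i)"
    using \<open>0 < u\<close> \<open>u < 1\<close> by simp_all
  moreover have "(1 - u) * (1 - a $ i) + u * (1 - b $ i) = 0"
    using arg_cong[OF u, of "\<lambda>x. x $ i"] by (simp add: algebra_simps)
  ultimately have "(1 - u) * (1 - a $ i) = 0" "u * (1 - b $ i) = 0"
    by linarith+
  then have "a $ i = 1" "b $ i = 1"
    using \<open>0 < u\<close> \<open>u < 1\<close> by simp_all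
  then show False
    using a b \<open>a \<noteq> b\<close> l1norm_le_1_component_eq_1 by auto
qed

lemma linear_axis_expansion:
  assumes "linear S"
  shows "S x = (\<Sum>i\<in>UNIV. x $ i *\<^sub>R S (axis i 1))"
proof -
  have "S x = S (\<Sum>i\<in>UNIV. x $ i *\<^sub>R axis i 1)"
    using basis_expansion[of x] by (simp add: scalar_mult_eq_scaleR)
  then show ?thesis
    by (simp add: linear_sum[OF assms] linear_scale[OF assms])
qed

lemma norm_linear_le_column_sum:
  assumes "linear S"
  shows "norm (S x) \<le> (\<Sum>i\<in>UNIV. \<bar>x $ i\<bar> * norm (S (axis i 1)))"
  using norm_sum[of "\<lambda>i. x $ i *\<^sub>R S (axis i 1)" UNIV]
  by (simp add: linear_axis_expansion[OF assms, of x])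

lemma norm_linear_le_l1norm:
  assumes "linear S" "\<And>i. norm (S (axis i 1)) \<le> K"
  shows "norm (S x) \<le> K * l1norm x"
proof -
  have "norm (S x) \<le> (\<Sum>i\<in>UNIV. \<bar>x $ i\<bar> * K)"
    using norm_linear_le_column_sum[OF assms(1)]
    by (rule order.trans) (intro sum_mono mult_left_mono assms(2) abs_ge_zero)
  then show ?thesis
    by (simp add: l1norm_def sum_distrib_left mult.commute)
qed

lemma bdd_above_opnorm1:
  fixes S :: "real^'n \<Rightarrow> 'b::real_normed_vector"
  assumes "linear S"
  shows "bdd_above ((\<lambda>x. norm (S x)) ` {x. l1norm x \<le> 1})"
proof (rule bdd_aboveI2)
  let ?K = "\<Sum>i\<in>UNIV. norm (S (axis i 1))"
  fix x :: "real^'n"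
  assume "x \<in> {x. l1norm x \<le> 1}"
  moreover have "norm (S (axis i 1)) \<le> ?K" for i
    by (rule member_le_sum) auto
  moreover have "0 \<le> ?K"
    by (simp add: sum_nonneg)
  ultimately show "norm (S x) \<le> ?K"
    using norm_linear_le_l1norm[OF assms, of ?K x] mult_left_le[of "l1norm x" ?K] by simp
qed

lemma norm_le_opnorm1:
  fixes S :: "real^'n \<Rightarrow> 'b::real_normed_vector"
  assumes "linear S" "l1norm x \<le> 1"
  shows "norm (S x) \<le> opnorm1 S"
  unfolding opnorm1_def using assms by (intro cSup_upper bdd_above_opnorm1) auto

lemma norm_axis_le_opnorm1:
  fixes S :: "real^'n \<Rightarrow> 'b::real_normed_vector"
  assumes "linear S"
  shows "norm (S (axis i 1)) \<le> opnorm1 S"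
  using assms by (rule norm_le_opnorm1) (simp add: l1norm_axis)

lemma opnorm1_le:
  fixes S :: "real^'n \<Rightarrow> 'b::real_normed_vector"
  assumes "linear S" "\<And>i. norm (S (axis i 1)) \<le> K"
  shows "opnorm1 S \<le> K"
  unfolding opnorm1_def
proof (rule cSup_least)
  have "0 \<in> {x. l1norm x \<le> 1}"
    by (simp add: l1norm_def)
  then show "(\<lambda>x. norm (S x)) ` {x. l1norm x \<le> 1} \<noteq> {}"
    by blast
  have "0 \<le> K"
    by (rule order.trans[OF norm_ge_zero assms(2)])
  then show "r \<le> K" if "r \<in> (\<lambda>x. norm (S x)) ` {x. l1norm x \<le> 1}" for r
  proof -
    obtain x where "l1norm x \<le> 1" "r = norm (S x)"
      using \<open>r \<in> _\<close> by blast
    then show ?thesis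
      using norm_linear_le_l1norm[OF assms, of x] mult_left_le[of "l1norm x" K] \<open>0 \<le> K\<close> by simp
  qed
qed

lemma opnorm1_attained_at_axis:
  fixes S :: "real^'n \<Rightarrow> 'b::real_normed_vector"
  assumes "linear S"
  obtains i where "norm (S (axis i 1)) = opnorm1 S"
proof -
  let ?n = "\<lambda>j. norm (S (axis j 1))"
  have "Max (range ?n) \<in> range ?n"
    by (rule Max_in) simp_all
  then obtain i where max: "Max (range ?n) = ?n i"
    by (rule rangeE)
  have i: "?n j \<le> ?n i" for j
    unfolding max[symmetric] by (rule Max_ge) simp_all
  have "norm (S (axis i 1)) = opnorm1 S"
    using opnorm1_le[OF assms i] norm_axis_le_opnorm1[OF assms, of i] by simp
  then show ?thesis by (rule that)
qed

lemma opnorm1_pos: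
  fixes S :: "real^'n \<Rightarrow> 'b::real_normed_vector"
  assumes "linear S" "S \<noteq> (\<lambda>x. 0)"
  shows "0 < opnorm1 S"
proof (rule ccontr)
  assume "\<not> 0 < opnorm1 S"
  then have "norm (S (axis i 1)) = 0" for i
    using norm_axis_le_opnorm1[OF assms(1), of i] norm_ge_zero[of "S (axis i 1)"] by linarith
  then have "S (axis i 1) = 0" for i
    by simp
  then have "S x = 0" for x
    by (simp add: linear_axis_expansion[OF assms(1), of x])
  with assms(2) show False by auto
qed

lemma abs_le_dual_norm:
  assumes "is_dual \<phi>" "linear S" "opnorm1 S \<le> 1"
  shows "\<bar>\<phi> S\<bar> \<le> dual_norm \<phi>"
  using assms unfolding is_dual_def dual_norm_def Lsp_def by (intro cSup_upper) auto

lemma dual_norm_le: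
  fixes \<phi> :: "(real^'n \<Rightarrow> 'b::real_normed_vector) \<Rightarrow> real"
  assumes "\<And>S. linear S \<Longrightarrow> opnorm1 S \<le> 1 \<Longrightarrow> \<bar>\<phi> S\<bar> \<le> c"
  shows "dual_norm \<phi> \<le> c"
  unfolding dual_norm_def Lsp_def
proof (rule cSup_least)
  have "linear (\<lambda>x::real^'n. 0::'b)" "opnorm1 (\<lambda>x::real^'n. 0::'b) \<le> 1"
    by (simp_all add: linear_zero opnorm1_le)
  then show "(\<lambda>S. \<bar>\<phi> S\<bar>) ` {S \<in> {T. linear T}. opnorm1 S \<le> 1} \<noteq> {}"
    by blast
qed (use assms in auto)

lemma is_dual_diff:
  assumes "is_dual \<phi>" "is_dual \<psi>"
  shows "is_dual (\<lambda>S. \<phi> S - \<psi> S)"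
  unfolding is_dual_def
proof (intro conjI ballI allI)
  show "\<phi> (\<lambda>x. a *\<^sub>R S x + b *\<^sub>R R x) - \<psi> (\<lambda>x. a *\<^sub>R S x + b *\<^sub>R R x)
      = a * (\<phi> S - \<psi> S) + b * (\<phi> R - \<psi> R)" if "S \<in> Lsp" "R \<in> Lsp" for S R a b
    using assms that unfolding is_dual_def by (simp add: algebra_simps)
  have "\<bar>\<phi> S - \<psi> S\<bar> \<le> dual_norm \<phi> + dual_norm \<psi>" if "linear S" "opnorm1 S \<le> 1" for S
    using abs_le_dual_norm[OF assms(1) that] abs_le_dual_norm[OF assms(2) that] by linarith
  then show "bdd_above ((\<lambda>S. \<bar>\<phi> S - \<psi> S\<bar>) ` {S \<in> Lsp. opnorm1 S \<le> 1})"
    by (intro bdd_aboveI2) (auto simp: Lsp_def)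
qed

lemma column_functional_in_Jset:
  fixes T :: "real^'n \<Rightarrow> 'b::real_normed_vector" and f :: "'b \<Rightarrow> real"
  assumes T: "linear T" "0 < opnorm1 T"
    and f: "linear f" "\<And>z. \<bar>f z\<bar> \<le> norm z" "f (T (axis i 1)) = opnorm1 T"
  shows "(\<lambda>S. f (S (axis i 1))) \<in> Jset T"
proof -
  let ?\<phi> = "\<lambda>S :: real^'n \<Rightarrow> 'b. f (S (axis i 1))"
  have le: "\<bar>?\<phi> S\<bar> \<le> opnorm1 S" if "linear S" for S
    using f(2) norm_axis_le_opnorm1[OF that] by (rule order.trans)
  have "is_dual ?\<phi>"
    unfolding is_dual_def
  proof (intro conjI ballI allI bdd_aboveI2[where M = 1])
    show "?\<phi> (\<lambda>x. a *\<^sub>R S x + b *\<^sub>R R x) = a * ?\<phi> S + b * ?\<phi> R" for S R a b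
      by (simp add: linear_add[OF f(1)] linear_scale[OF f(1)])
    show "\<bar>?\<phi> S\<bar> \<le> 1" if "S \<in> {S \<in> Lsp. opnorm1 S \<le> 1}" for S
      using le[of S] that by (auto simp: Lsp_def)
  qed
  moreover have "dual_norm ?\<phi> \<le> 1"
    using le by (intro dual_norm_le) force
  moreover have "1 \<le> dual_norm ?\<phi>"
  proof -
    define S where "S x = inverse (opnorm1 T) *\<^sub>R T x" for x
    have "linear S"
      unfolding S_def by (intro linearI) (simp_all add: linear_add[OF T(1)] linear_scale[OF T(1)] algebra_simps)
    moreover have "opnorm1 S \<le> 1"
      using \<open>linear S\<close> T norm_axis_le_opnorm1[OF T(1)]
      by (intro opnorm1_le) (auto simp: S_def field_simps)
    moreover have "?\<phi> S = 1"
      using T(2) by (simp add: S_def linear_scale[OF f(1)] f(3))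
    ultimately show ?thesis
      using abs_le_dual_norm[OF \<open>is_dual ?\<phi>\<close>] by fastforce
  qed
  ultimately show ?thesis
    using f(3) by (simp add: Jset_def)
qed

text \<open>
  Hahn-Banach for the norm of a real normed space, by Zorn's lemma. A linear functional on a
  subspace is represented by its graph \<open>G \<subseteq> Y \<times> \<real>\<close>, so that extension is just inclusion.
\<close>

definition norm_dominated :: "('a::real_normed_vector \<times> real) set \<Rightarrow> bool" where
  "norm_dominated G \<longleftrightarrow> subspace G \<and> (\<forall>(x, a) \<in> G. a \<le> norm x)"

lemma norm_dominatedD:
  assumes "norm_dominated G"
  shows norm_dominated_zero: "(0, 0) \<in> G"
    and norm_dominated_add: "(v, a) \<in> G \<Longrightarrow> (w, b) \<in> G \<Longrightarrow> (v + w, a + b) \<in> G"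
    and norm_dominated_scale: "(v, a) \<in> G \<Longrightarrow> (t *\<^sub>R v, t * a) \<in> G"
    and norm_dominated_le: "(v, a) \<in> G \<Longrightarrow> a \<le> norm v"
  using assms subspace_0[of G] subspace_add[of G "(v, a)" "(w, b)"]
    subspace_scale[of G "(v, a)" t]
  by (auto simp: norm_dominated_def zero_prod_def)

lemma norm_dominated_unique:
  assumes G: "norm_dominated G" and "(x, a) \<in> G" "(x, b) \<in> G"
  shows "a = b"
proof -
  have "(x + (-1) *\<^sub>R x, a + (-1) * b) \<in> G" "(x + (-1) *\<^sub>R x, b + (-1) * a) \<in> G"
    using assms by (blast intro: norm_dominatedD)+
  then have "a - b \<le> 0" "b - a \<le> 0"
    using norm_dominated_le[OF G] by fastforce+
  then show ?thesis by simp
qed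

text \<open>
  The one-step extension: \<open>c\<close> lies between \<open>a - \<parallel>v - x0\<parallel>\<close> and \<open>\<parallel>w + x0\<parallel> - b\<close> for all
  \<open>(v, a), (w, b) \<in> G\<close>; the sign \<open>\<sigma>\<close> packs the two resulting inequalities into one.
\<close>

lemma norm_dominated_extension_constant:
  assumes G: "norm_dominated G"
  obtains c where "\<And>v a \<sigma>. (v, a) \<in> G \<Longrightarrow> \<bar>\<sigma>\<bar> = 1 \<Longrightarrow> a + \<sigma> * c \<le> norm (v + \<sigma> *\<^sub>R x0)"
proof -
  define L where "L = {a - norm (v - x0) | v a. (v, a) \<in> G}"
  have L_le: "l \<le> norm (w + x0) - b" if "l \<in> L" "(w, b) \<in> G" for l w b
  proof -
    obtain v a where va: "(v, a) \<in> G" "l = a - norm (v - x0)"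
      using \<open>l \<in> L\<close> L_def by blast
    have "a + b \<le> norm ((v - x0) + (w + x0))"
      using norm_dominated_add[OF G va(1) that(2)] norm_dominated_le[OF G] by simp
    also have "\<dots> \<le> norm (v - x0) + norm (w + x0)" by (rule norm_triangle_ineq)
    finally show ?thesis using va by simp
  qed
  have "l \<le> Sup L" if "l \<in> L" for l
    using L_le[OF _ norm_dominated_zero[OF G]] that by (intro cSup_upper bdd_aboveI) auto
  moreover have "Sup L \<le> norm (w + x0) - b" if "(w, b) \<in> G" for w b
    using norm_dominated_zero[OF G] L_le that by (intro cSup_least) (auto simp: L_def)
  ultimately have "a + \<sigma> * Sup L \<le> norm (v + \<sigma> *\<^sub>R x0)" if "(v, a) \<in> G" "\<bar>\<sigma>\<bar> = 1" for v a \<sigma>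
    using that by (fastforce simp: L_def abs_if split: if_splits)
  then show ?thesis by (rule that)
qed

lemma norm_dominated_extend:
  assumes G: "norm_dominated G" and x0: "\<And>a. (x0, a) \<notin> G"
  obtains G' where "norm_dominated G'" "G \<subset> G'"
proof -
  obtain c where c: "\<And>v a \<sigma>. (v, a) \<in> G \<Longrightarrow> \<bar>\<sigma>\<bar> = 1 \<Longrightarrow> a + \<sigma> * c \<le> norm (v + \<sigma> *\<^sub>R x0)"
    using norm_dominated_extension_constant[OF G] by blast
  have le: "a + t * c \<le> norm (v + t *\<^sub>R x0)" if "(v, a) \<in> G" for v a t
  proof (cases "t = 0")
    case True
    then show ?thesis using norm_dominated_le[OF G that] by simp
  next
    case False
    then have "\<bar>t\<bar> > 0" by simp
    have "inverse \<bar>t\<bar> * a + sgn t * c \<le> norm (inverse \<bar>t\<bar> *\<^sub>R v + sgn t *\<^sub>R x0)"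
      using c[OF norm_dominated_scale[OF G that]] False by (simp add: abs_sgn)
    then have "\<bar>t\<bar> * (inverse \<bar>t\<bar> * a + sgn t * c) \<le> \<bar>t\<bar> * norm (inverse \<bar>t\<bar> *\<^sub>R v + sgn t *\<^sub>R x0)"
      using \<open>\<bar>t\<bar> > 0\<close> by (simp only: mult_le_cancel_left_pos)
    also have "\<dots> = norm (\<bar>t\<bar> *\<^sub>R (inverse \<bar>t\<bar> *\<^sub>R v + sgn t *\<^sub>R x0))" by simp
    finally show ?thesis
      using False by (simp add: algebra_simps abs_mult_sgn)
  qed
  define G' where "G' = span (insert (x0, c) G)"
  have "subspace G" using G by (simp add: norm_dominated_def)
  have "\<exists>v a t. (v, a) \<in> G \<and> p = (v + t *\<^sub>R x0, a + t * c)" if "p \<in> G'" for p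
  proof -
    obtain t where "p - t *\<^sub>R (x0, c) \<in> G"
      using \<open>p \<in> G'\<close> \<open>subspace G\<close> unfolding G'_def span_insert by (auto simp: span_eq_iff[THEN iffD2])
    then have "(fst p - t *\<^sub>R x0, snd p - t * c) \<in> G \<and>
        p = ((fst p - t *\<^sub>R x0) + t *\<^sub>R x0, (snd p - t * c) + t * c)"
      by (cases p) auto
    then show ?thesis by blast
  qed
  then have "norm_dominated G'"
    using le by (fastforce simp: norm_dominated_def G'_def)
  moreover have "G \<subset> G'"
    using x0 span_superset[of "insert (x0, c) G"] unfolding G'_def by blast
  ultimately show ?thesis by (rule that)
qed

lemma norm_dominated_Union_chain:
  assumes "C \<noteq> {}" and "\<And>G. G \<in> C \<Longrightarrow> norm_dominated G"
    and chain: "\<And>G H. G \<in> C \<Longrightarrow> H \<in> C \<Longrightarrow> G \<subseteq> H \<or> H \<subseteq> G"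
  shows "norm_dominated (\<Union>C)"
proof -
  have sub: "subspace G" if "G \<in> C" for G
    using assms(2)[OF that] by (simp add: norm_dominated_def)
  have "subspace (\<Union>C)"
    unfolding subspace_def
  proof (intro conjI ballI allI)
    show "0 \<in> \<Union>C"
      using assms(1) sub subspace_0 by blast
    show "p + q \<in> \<Union>C" if pq: "p \<in> \<Union>C" "q \<in> \<Union>C" for p q
    proof -
      obtain G H where "G \<in> C" "H \<in> C" "p \<in> G" "q \<in> H"
        using pq by blast
      then obtain K where "K \<in> C" "p \<in> K" "q \<in> K"
        using chain[of G H] by blast
      then show ?thesis
        using sub subspace_add by blast
    qed
    show "t *\<^sub>R p \<in> \<Union>C" if "p \<in> \<Union>C" for p t
      using that sub subspace_scale by blast
  qed
  then show ?thesis
    using assms(2) by (auto simp: norm_dominated_def)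
qed

lemma norming_functional_exists:
  fixes y :: "'a::real_normed_vector"
  obtains f :: "'a \<Rightarrow> real" where "linear f" "\<And>z. \<bar>f z\<bar> \<le> norm z" "f y = norm y"
proof -
  let ?A = "{G. norm_dominated G \<and> (y, norm y) \<in> G}"
  have "\<forall>(x, a) \<in> span {(y, norm y)}. a \<le> norm x"
    by (auto simp: span_singleton abs_mult intro: mult_right_mono)
  then have "span {(y, norm y)} \<in> ?A"
    by (simp add: norm_dominated_def span_base)
  moreover have "\<Union>C \<in> ?A" if "C \<noteq> {}" "subset.chain ?A C" for C
  proof -
    have "norm_dominated (\<Union>C)"
      using that by (intro norm_dominated_Union_chain) (auto simp: subset.chain_def)
    then show ?thesis
      using that by (auto simp: subset.chain_def)
  qed
  ultimately obtain M where "M \<in> ?A" and "\<forall>G \<in> ?A. M \<subseteq> G \<longrightarrow> G = M"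
    using subset_Zorn_nonempty[of ?A] by blast
  then have M: "norm_dominated M" "(y, norm y) \<in> M"
    and max: "\<And>G. norm_dominated G \<Longrightarrow> M \<subseteq> G \<Longrightarrow> G = M"
    by auto
  have "\<exists>a. (x, a) \<in> M" for x
  proof (rule ccontr)
    assume "\<nexists>a. (x, a) \<in> M"
    then obtain G where "norm_dominated G" "M \<subset> G"
      using norm_dominated_extend[OF M(1)] by blast
    then show False
      using max[of G] by blast
  qed
  then obtain f where f: "\<And>x. (x, f x) \<in> M"
    by metis
  have f_eq: "f x = a" if "(x, a) \<in> M" for x a
    using norm_dominated_unique[OF M(1) f that] .
  have "linear f"
  proof (rule linearI)
    show "f (x + z) = f x + f z" for x z
      using f_eq[OF norm_dominated_add[OF M(1) f f]] by simp
    show "f (t *\<^sub>R x) = t *\<^sub>R f x" for t x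
      using f_eq[OF norm_dominated_scale[OF M(1) f]] by simp
  qed
  moreover have "\<bar>f z\<bar> \<le> norm z" for z
    using norm_dominated_le[OF M(1) f, of z] norm_dominated_le[OF M(1) f, of "-z"]
      linear_neg[OF \<open>linear f\<close>, of z] by (simp add: abs_le_iff)
  moreover have "f y = norm y"
    using f_eq M(2) by blast
  ultimately show ?thesis
    by (rule that)
qed

lemma eps_smooth_two_norming_axes:
  fixes T :: "real^'n \<Rightarrow> 'b::real_normed_vector"
  assumes T: "linear T" and smooth: "eps_smooth \<epsilon> T" and "i \<noteq> j"
    and i: "norm (T (axis i 1)) = opnorm1 T" and j: "norm (T (axis j 1)) = opnorm1 T"
  shows "2 \<le> \<epsilon>"
proof -
  define K where "K = opnorm1 T"
  have "0 < K"
    using opnorm1_pos[OF T] smooth by (simp add: K_def eps_smooth_def)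
  obtain f where f: "linear f" "\<And>z. \<bar>f z\<bar> \<le> norm z" "f (T (axis i 1)) = K"
    using norming_functional_exists[of "T (axis i 1)"] i by (metis K_def)
  obtain g where g: "linear g" "\<And>z. \<bar>g z\<bar> \<le> norm z" "g (T (axis j 1)) = K"
    using norming_functional_exists[of "T (axis j 1)"] j by (metis K_def)
  define \<phi> where "\<phi> S = f (S (axis i 1))" for S :: "real^'n \<Rightarrow> 'b"
  define \<psi> where "\<psi> S = g (S (axis j 1))" for S :: "real^'n \<Rightarrow> 'b"
  have "\<phi> \<in> Jset T" "\<psi> \<in> Jset T"
    using column_functional_in_Jset[OF T] f g \<open>0 < K\<close> unfolding \<phi>_def \<psi>_def K_def by auto
  then have "is_dual \<phi>" "is_dual \<psi>" and le_eps: "dual_norm (\<lambda>S. \<phi> S - \<psi> S) \<le> \<epsilon>"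
    using smooth by (auto simp: Jset_def eps_smooth_def)
  define S where "S x = (x $ i / K) *\<^sub>R T (axis i 1) - (x $ j / K) *\<^sub>R T (axis j 1)" for x
  have "linear S"
    unfolding S_def by (intro linearI) (simp_all add: algebra_simps add_divide_distrib diff_divide_distrib)
  moreover have "opnorm1 S \<le> 1"
  proof (rule opnorm1_le[OF \<open>linear S\<close>])
    show "norm (S (axis k 1)) \<le> 1" for k
      using \<open>i \<noteq> j\<close> \<open>0 < K\<close> i j by (cases "k = i"; cases "k = j") (auto simp: S_def axis_def K_def)
  qed
  moreover have "\<phi> S - \<psi> S = 2"
  proof -
    have "S (axis i 1) = (1 / K) *\<^sub>R T (axis i 1)" "S (axis j 1) = - ((1 / K) *\<^sub>R T (axis j 1))"
      using \<open>i \<noteq> j\<close> by (simp_all add: S_def axis_def)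
    then show ?thesis
      using \<open>0 < K\<close> f(3) g(3)
      by (simp add: \<phi>_def \<psi>_def linear_neg[OF g(1)] linear_scale[OF f(1)] linear_scale[OF g(1)])
  qed
  ultimately have "2 \<le> dual_norm (\<lambda>S. \<phi> S - \<psi> S)"
    using abs_le_dual_norm[OF is_dual_diff[OF \<open>is_dual \<phi>\<close> \<open>is_dual \<psi>\<close>]] by fastforce
  then show ?thesis
    using le_eps by linarith
qed

lemma M_set_unique_norming_axis:
  fixes T :: "real^'n \<Rightarrow> 'b::real_normed_vector"
  assumes T: "linear T" and i: "norm (T (axis i 1)) = opnorm1 T"
    and others: "\<And>j. j \<noteq> i \<Longrightarrow> norm (T (axis j 1)) < opnorm1 T"
  shows "M_set T = {axis i 1, - axis i 1}"
proof (intro equalityI subsetI)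
  fix x
  assume "x \<in> M_set T"
  then have x: "l1norm x = 1" "norm (T x) = opnorm1 T"
    by (auto simp: M_set_def)
  have "x $ j = 0" if "j \<noteq> i" for j
  proof (rule ccontr)
    assume "x $ j \<noteq> 0"
    have "norm (T x) \<le> (\<Sum>k\<in>UNIV. \<bar>x $ k\<bar> * norm (T (axis k 1)))"
      by (rule norm_linear_le_column_sum[OF T])
    also have "\<dots> < (\<Sum>k\<in>UNIV. \<bar>x $ k\<bar> * opnorm1 T)"
    proof (rule sum_strict_mono_ex1)
      show "\<forall>k\<in>UNIV. \<bar>x $ k\<bar> * norm (T (axis k 1)) \<le> \<bar>x $ k\<bar> * opnorm1 T"
        by (simp add: mult_left_mono norm_axis_le_opnorm1[OF T])
      show "\<exists>k\<in>UNIV. \<bar>x $ k\<bar> * norm (T (axis k 1)) < \<bar>x $ k\<bar> * opnorm1 T"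
        using others[OF that] \<open>x $ j \<noteq> 0\<close> by (intro bexI[of _ j]) simp_all
    qed simp
    also have "\<dots> = opnorm1 T"
      using x(1) by (simp add: l1norm_def sum_distrib_right[symmetric])
    finally show False
      using x(2) by simp
  qed
  then have "x = x $ i *\<^sub>R axis i 1"
    by (auto simp: vec_eq_iff axis_def)
  moreover from this have "\<bar>x $ i\<bar> = 1"
    using x(1) by (metis l1norm_axis l1norm_scaleR mult.right_neutral abs_one)
  ultimately show "x \<in> {axis i 1, - axis i 1}"
    by (cases "x $ i \<ge> 0") (auto simp: abs_if)
next
  fix x :: "real^'n"
  assume "x \<in> {axis i 1, - axis i 1}"
  then show "x \<in> M_set T"
    using i by (auto simp: M_set_def l1norm_axis l1norm_uminus linear_neg[OF T])
qed

theorem proposition3p3: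
  fixes T :: "real^'n \<Rightarrow> 'b::real_normed_vector" and \<epsilon> :: real
  assumes "linear T" and "T \<noteq> (\<lambda>x. 0)"
    and "0 \<le> \<epsilon>" and "\<epsilon> < 2" and "eps_smooth \<epsilon> T"
  shows "\<exists>u. u extreme_point_of {x. l1norm x \<le> 1} \<and> M_set T = {u, -u}"
proof -
  obtain i where i: "norm (T (axis i 1)) = opnorm1 T"
    by (rule opnorm1_attained_at_axis[OF assms(1)])
  have "norm (T (axis j 1)) < opnorm1 T" if "j \<noteq> i" for j
    using norm_axis_le_opnorm1[OF assms(1), of j] eps_smooth_two_norming_axes[OF assms(1,5) that _ i]
      assms(4) by fastforce
  then have "M_set T = {axis i 1, - axis i 1}"
    by (rule M_set_unique_norming_axis[OF assms(1) i])
  then show ?thesis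
    using axis_extreme_point_l1_ball by blast
qed

end
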